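(* Let $\mathbf{A}=\langle A;P\rangle$ be a partial algebra with more than one element, and let $\mathbf{A}_0$ be its one-point completion. Then for every $n$: (1) any generating set for $\mathbf{A}^n$ is a generating set for $\mathbf{A}_0^n$, and (2) any generating set for $\mathbf{A}_0^n$ contains a generating set for $\mathbf{A}^n$. In particular, least size generating sets for $\mathbf{A}^n$ and $\mathbf{A}_0^n$ have the same size, and if $\mathbf{A}^n$ or $\mathbf{A}_0^n$ have any minimal generating sets, then they are the same.
   Context: A partial algebra is a set equipped with a set of partial operations. Powers of partial algebras are formed coordinatewise: a partial operation is defined on a tuple of elements of $A^n$ exactly when it is defined in each coordinate. A subset $G$ generates a partial algebra if the smallest subset containing $G$ and closed under all partial operations (whenever defined) is the whole universe. The one-point completion of $\mathbf{A}=\langle A;P\rangle$ is the total algebra $\mathbf{A}_0$ with universe $A_0=A\cup\{0\}$, where $0\notin A$, and operations $\{p_0: p\in P\}\cup\{\wedge\}$: if $p\in P$ is an $m$-ary partial operation with domain $D\subseteq A^m$, then $p_0(\vec a)=p(\vec a)$ for $\vec a\in D$ and $p_0(\vec a)=0$ for $\vec a\in A_0^m\setminus D$; and $a\wedge b=a$ if $a=b$, $a\wedge b=0$ otherwise. *)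

theory Defs
  imports Main
begin

definition partial_algebra :: "'a set \<Rightarrow> ('i \<Rightarrow> nat) \<Rightarrow> ('i \<Rightarrow> 'a list \<Rightarrow> 'a option) \<Rightarrow> bool" where
  "partial_algebra U ar f \<longleftrightarrow>
     (\<forall>i xs y. f i xs = Some y \<longrightarrow> length xs = ar i \<and> set xs \<subseteq> U \<and> y \<in> U)"

inductive_set gen_by :: "('i \<Rightarrow> 'a list \<Rightarrow> 'a option) \<Rightarrow> 'a set \<Rightarrow> 'a set"
  for f :: "'i \<Rightarrow> 'a list \<Rightarrow> 'a option" and G :: "'a set" where
  base: "x \<in> G \<Longrightarrow> x \<in> gen_by f G"
| step: "(\<forall>x\<in>set xs. x \<in> gen_by f G) \<Longrightarrow> f i xs = Some y \<Longrightarrow> y \<in> gen_by f G"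

definition generates :: "'a set \<Rightarrow> ('i \<Rightarrow> 'a list \<Rightarrow> 'a option) \<Rightarrow> 'a set \<Rightarrow> bool" where
  "generates U f G \<longleftrightarrow> G \<subseteq> U \<and> gen_by f G = U"

definition minimal_generating :: "'a set \<Rightarrow> ('i \<Rightarrow> 'a list \<Rightarrow> 'a option) \<Rightarrow> 'a set \<Rightarrow> bool" where
  "minimal_generating U f G \<longleftrightarrow> generates U f G \<and> (\<forall>H. H \<subset> G \<longrightarrow> \<not> generates U f H)"

definition pow_univ :: "nat \<Rightarrow> 'a set \<Rightarrow> 'a list set" where
  "pow_univ n U = {xs. length xs = n \<and> set xs \<subseteq> U}"

definition pow_op :: "nat \<Rightarrow> ('i \<Rightarrow> nat) \<Rightarrow> ('i \<Rightarrow> 'a list \<Rightarrow> 'a option)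
    \<Rightarrow> 'i \<Rightarrow> 'a list list \<Rightarrow> 'a list option" where
  "pow_op n ar f i xss =
     (if length xss = ar i \<and> (\<forall>xs\<in>set xss. length xs = n)
         \<and> (\<forall>j<n. f i (map (\<lambda>xs. xs ! j) xss) \<noteq> None)
      then Some (map (\<lambda>j. the (f i (map (\<lambda>xs. xs ! j) xss))) [0..<n])
      else None)"

text \<open>One-point completion with new element z \<notin> U: operation symbols 'i option,
  Some i is p_0 and None is the binary operation \<and>.\<close>

fun comp_ar :: "('i \<Rightarrow> nat) \<Rightarrow> 'i option \<Rightarrow> nat" where
  "comp_ar ar (Some i) = ar i"
| "comp_ar ar None = 2"

fun comp_op :: "'a set \<Rightarrow> 'a \<Rightarrow> ('i \<Rightarrow> nat) \<Rightarrow> ('i \<Rightarrow> 'a list \<Rightarrow> 'a option)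
    \<Rightarrow> 'i option \<Rightarrow> 'a list \<Rightarrow> 'a option" where
  "comp_op U z ar f (Some i) xs =
     (if length xs = ar i \<and> set xs \<subseteq> insert z U
      then (case f i xs of Some y \<Rightarrow> Some y | None \<Rightarrow> Some z) else None)"
| "comp_op U z ar f None xs =
     (if length xs = 2 \<and> set xs \<subseteq> insert z U
      then Some (if xs ! 0 = xs ! 1 then xs ! 0 else z) else None)"

end

theory Submission
  imports Defs
begin

text \<open>Each partial operation of \<open>\<^bold>A\<^sup>n\<close> is a restriction of an operation of \<open>\<^bold>A\<^sub>0\<^sup>n\<close>, so
  a generating set of \<open>\<^bold>A\<^sup>n\<close> generates a subuniverse of \<open>\<^bold>A\<^sub>0\<^sup>n\<close> containing \<open>A\<^sup>n\<close>; and every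
  \<open>x \<in> A\<^sub>0\<^sup>n\<close> is the meet of the two tuples of \<open>A\<^sup>n\<close> obtained by replacing the \<open>0\<close>-entries of
  \<open>x\<close> by \<open>a\<close> resp. \<open>b \<noteq> a\<close>. Conversely, \<open>0\<close> is absorbing, so an element of \<open>A\<^sup>n\<close> produced by
  an operation of \<open>\<^bold>A\<^sub>0\<^sup>n\<close> is either a meet whose first argument is itself, or the value of a
  partial operation of \<open>\<^bold>A\<^sup>n\<close> at arguments that again lie in \<open>A\<^sup>n\<close>; hence the elements of
  \<open>A\<^sup>n\<close> in a generating set of \<open>\<^bold>A\<^sub>0\<^sup>n\<close> generate \<open>\<^bold>A\<^sup>n\<close>.\<close>

lemma pow_op_eq_Some_iff:
  "pow_op n ar f i xss = Some y \<longleftrightarrow>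
     length xss = ar i \<and> (\<forall>xs\<in>set xss. length xs = n) \<and> length y = n
     \<and> (\<forall>j<n. f i (map (\<lambda>xs. xs ! j) xss) = Some (y ! j))"
proof
  assume "pow_op n ar f i xss = Some y"
  then show "length xss = ar i \<and> (\<forall>xs\<in>set xss. length xs = n) \<and> length y = n
     \<and> (\<forall>j<n. f i (map (\<lambda>xs. xs ! j) xss) = Some (y ! j))"
    by (auto simp: pow_op_def split: if_splits)
next
  assume h: "length xss = ar i \<and> (\<forall>xs\<in>set xss. length xs = n) \<and> length y = n
     \<and> (\<forall>j<n. f i (map (\<lambda>xs. xs ! j) xss) = Some (y ! j))"
  then have "map (\<lambda>j. the (f i (map (\<lambda>xs. xs ! j) xss))) [0..<n] = y"
    by (intro nth_equalityI) auto
  with h show "pow_op n ar f i xss = Some y"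
    by (auto simp: pow_op_def)
qed

lemma nth_in_pow_univ: "xs \<in> pow_univ n U \<Longrightarrow> j < n \<Longrightarrow> xs ! j \<in> U"
  unfolding pow_univ_def by (blast intro: nth_mem)

lemma pow_univ_mono: "U \<subseteq> V \<Longrightarrow> pow_univ n U \<subseteq> pow_univ n V"
  unfolding pow_univ_def by blast

lemma partial_algebra_pow:
  assumes "partial_algebra U ar f"
  shows "partial_algebra (pow_univ n U) ar (pow_op n ar f)"
  unfolding partial_algebra_def
proof (intro allI impI)
  fix i xss y
  assume "pow_op n ar f i xss = Some y"
  then have lengths: "length xss = ar i" "\<forall>xs\<in>set xss. length xs = n" "length y = n"
    and coords: "\<forall>j<n. f i (map (\<lambda>xs. xs ! j) xss) = Some (y ! j)"
    by (simp_all add: pow_op_eq_Some_iff)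
  have args: "set (map (\<lambda>xs. xs ! j) xss) \<subseteq> U" and val: "y ! j \<in> U" if "j < n" for j
    using assms coords that unfolding partial_algebra_def by blast+
  have "set xs \<subseteq> U" if "xs \<in> set xss" for xs
    using args that lengths(2) by (fastforce simp: in_set_conv_nth)
  moreover have "set y \<subseteq> U"
    using val lengths(3) by (auto simp: set_conv_nth)
  ultimately show "length xss = ar i \<and> set xss \<subseteq> pow_univ n U \<and> y \<in> pow_univ n U"
    using lengths by (auto simp: pow_univ_def)
qed

lemma gen_by_subset:
  assumes "partial_algebra U ar f" and "G \<subseteq> U"
  shows "gen_by f G \<subseteq> U"
proof
  fix y
  assume "y \<in> gen_by f G"
  then show "y \<in> U"
    by induction (use assms in \<open>auto simp: partial_algebra_def\<close>)
qed

lemma gen_by_mono_ops: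
  assumes "\<And>i xs y. f i xs = Some y \<Longrightarrow> \<exists>k. g k xs = Some y"
  shows "gen_by f G \<subseteq> gen_by g G"
proof
  fix y
  assume "y \<in> gen_by f G"
  then show "y \<in> gen_by g G"
  proof induction
    case (base x)
    then show ?case by (rule gen_by.base)
  next
    case (step xs i y)
    then obtain k where "g k xs = Some y" using assms by blast
    with step.IH show ?case by (auto intro: gen_by.step)
  qed
qed

lemma partial_algebra_completion:
  assumes "partial_algebra U ar f"
  shows "partial_algebra (insert z U) (comp_ar ar) (comp_op U z ar f)"
  unfolding partial_algebra_def
proof (intro allI impI)
  fix i xs y
  assume h: "comp_op U z ar f i xs = Some y"
  show "length xs = comp_ar ar i \<and> set xs \<subseteq> insert z U \<and> y \<in> insert z U"
  proof (cases i)
    case None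
    with h have "length xs = 2" "set xs \<subseteq> insert z U"
      and "y = (if xs ! 0 = xs ! 1 then xs ! 0 else z)"
      by (auto split: if_splits)
    moreover from this(2) have "xs ! 0 \<in> insert z U"
      by (rule subsetD) (simp add: \<open>length xs = 2\<close>)
    ultimately show ?thesis using None by auto
  next
    case Some
    with h assms show ?thesis
      by (auto simp: partial_algebra_def split: if_splits option.splits)
  qed
qed

lemma comp_op_Some_if_defined:
  assumes "partial_algebra U ar f" and "f i xs = Some y"
  shows "comp_op U z ar f (Some i) xs = Some y"
  using assms by (auto simp: partial_algebra_def)

lemma gen_by_pow_subset_completion:
  assumes "partial_algebra U ar f"
  shows "gen_by (pow_op n ar f) G \<subseteq> gen_by (pow_op n (comp_ar ar) (comp_op U z ar f)) G"
proof (rule gen_by_mono_ops)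
  fix i xss y
  assume "pow_op n ar f i xss = Some y"
  with comp_op_Some_if_defined[OF assms]
  have "pow_op n (comp_ar ar) (comp_op U z ar f) (Some i) xss = Some y"
    by (simp add: pow_op_eq_Some_iff del: comp_op.simps)
  then show "\<exists>k. pow_op n (comp_ar ar) (comp_op U z ar f) k xss = Some y" ..
qed

lemma pow_completion_meet_decomposition:
  assumes "x \<in> pow_univ n (insert z U)" and "a \<in> U" "b \<in> U" "a \<noteq> b" and "z \<notin> U"
  obtains u v where "u \<in> pow_univ n U" "v \<in> pow_univ n U"
    and "pow_op n (comp_ar ar) (comp_op U z ar f) None [u, v] = Some x"
proof
  define u where "u = map (\<lambda>c. if c \<in> U then c else a) x"
  define v where "v = map (\<lambda>c. if c \<in> U then c else b) x"
  show "u \<in> pow_univ n U" "v \<in> pow_univ n U"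
    using assms by (auto simp: pow_univ_def u_def v_def)
  have "x ! j \<in> insert z U" if "j < n" for j
    using assms(1) that by (rule nth_in_pow_univ)
  then have "comp_op U z ar f None [u ! j, v ! j] = Some (x ! j)" if "j < n" for j
    using assms that by (auto simp: pow_univ_def u_def v_def)
  with assms(1) show "pow_op n (comp_ar ar) (comp_op U z ar f) None [u, v] = Some x"
    by (auto simp: pow_op_eq_Some_iff pow_univ_def u_def v_def)
qed

lemma pow_completion_op_into_pow_cases:
  assumes "z \<notin> U" and "y \<in> pow_univ n U"
    and op: "pow_op n (comp_ar ar) (comp_op U z ar f) k xss = Some y"
  shows "(k = None \<and> y \<in> set xss) \<or> (\<exists>i. k = Some i \<and> pow_op n ar f i xss = Some y)"
proof -
  from op have lengths: "length xss = comp_ar ar k" "\<forall>xs\<in>set xss. length xs = n" "length y = n"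
    and coords: "\<forall>j<n. comp_op U z ar f k (map (\<lambda>xs. xs ! j) xss) = Some (y ! j)"
    by (simp_all add: pow_op_eq_Some_iff)
  have y_coords: "y ! j \<noteq> z" if "j < n" for j
    using nth_in_pow_univ[OF assms(2) that] assms(1) by blast
  show ?thesis
  proof (cases k)
    case None
    with lengths(1) obtain u v where uv: "xss = [u, v]"
      by (auto simp: numeral_2_eq_2 length_Suc_conv)
    have "u ! j = y ! j" if "j < n" for j
    proof -
      from coords that None uv
      have "comp_op U z ar f None [u ! j, v ! j] = Some (y ! j)" by simp
      with y_coords[OF that] show ?thesis by (simp split: if_splits)
    qed
    then have "u = y"
      using lengths uv by (intro nth_equalityI) auto
    with None uv show ?thesis by simp
  next
    case (Some i)
    have "f i (map (\<lambda>xs. xs ! j) xss) = Some (y ! j)" if "j < n" for j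
    proof -
      from coords that Some
      have "comp_op U z ar f (Some i) (map (\<lambda>xs. xs ! j) xss) = Some (y ! j)" by simp
      with y_coords[OF that] show ?thesis by (simp split: if_splits option.splits)
    qed
    with Some lengths show ?thesis by (simp add: pow_op_eq_Some_iff)
  qed
qed

lemma gen_by_pow_completion_reflect:
  assumes pa: "partial_algebra U ar f" and "z \<notin> U"
    and "y \<in> gen_by (pow_op n (comp_ar ar) (comp_op U z ar f)) G" and "y \<in> pow_univ n U"
  shows "y \<in> gen_by (pow_op n ar f) (G \<inter> pow_univ n U)"
  using assms(3,4)
proof induction
  case (base x)
  then show ?case by (simp add: gen_by.base)
next
  case (step xss k y)
  from pow_completion_op_into_pow_cases[OF assms(2) step.prems step.hyps]
  consider "y \<in> set xss" | i where "pow_op n ar f i xss = Some y"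
    by blast
  then show ?case
  proof cases
    case 1
    with step.IH step.prems show ?thesis by blast
  next
    case 2
    with partial_algebra_pow[OF pa] have "set xss \<subseteq> pow_univ n U"
      by (auto simp: partial_algebra_def)
    with step.IH have "\<forall>xs\<in>set xss. xs \<in> gen_by (pow_op n ar f) (G \<inter> pow_univ n U)"
      by blast
    then show ?thesis using 2 by (rule gen_by.step)
  qed
qed

lemma generates_pow_completion:
  assumes pa: "partial_algebra U ar f" and "a \<in> U" "b \<in> U" "a \<noteq> b" and "z \<notin> U"
    and gen: "generates (pow_univ n U) (pow_op n ar f) G"
  shows "generates (pow_univ n (insert z U)) (pow_op n (comp_ar ar) (comp_op U z ar f)) G"
proof -
  let ?F0 = "pow_op n (comp_ar ar) (comp_op U z ar f)"
  have G_sub: "G \<subseteq> pow_univ n (insert z U)"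
    using gen pow_univ_mono[of U "insert z U" n] by (auto simp: generates_def)
  have pow_sub: "pow_univ n U \<subseteq> gen_by ?F0 G"
    using gen gen_by_pow_subset_completion[OF pa, of n G z] by (simp add: generates_def)
  have "pow_univ n (insert z U) \<subseteq> gen_by ?F0 G"
  proof
    fix x
    assume "x \<in> pow_univ n (insert z U)"
    then obtain u v where "u \<in> pow_univ n U" "v \<in> pow_univ n U" and "?F0 None [u, v] = Some x"
      by (rule pow_completion_meet_decomposition[OF _ assms(2-5)])
    moreover from pow_sub this(1,2) have "\<forall>w\<in>set [u, v]. w \<in> gen_by ?F0 G"
      by auto
    ultimately show "x \<in> gen_by ?F0 G"
      by (blast intro: gen_by.step)
  qed
  moreover have "gen_by ?F0 G \<subseteq> pow_univ n (insert z U)"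
    by (rule gen_by_subset[OF partial_algebra_pow[OF partial_algebra_completion[OF pa]] G_sub])
  ultimately show ?thesis
    using G_sub by (auto simp: generates_def)
qed

lemma generates_pow_restrict:
  assumes pa: "partial_algebra U ar f" and "z \<notin> U"
    and gen: "generates (pow_univ n (insert z U)) (pow_op n (comp_ar ar) (comp_op U z ar f)) G"
  shows "generates (pow_univ n U) (pow_op n ar f) (G \<inter> pow_univ n U)"
proof -
  have "pow_univ n U \<subseteq> gen_by (pow_op n ar f) (G \<inter> pow_univ n U)"
  proof
    fix y
    assume y: "y \<in> pow_univ n U"
    then have "y \<in> gen_by (pow_op n (comp_ar ar) (comp_op U z ar f)) G"
      using gen pow_univ_mono[of U "insert z U" n] by (auto simp: generates_def)
    with y show "y \<in> gen_by (pow_op n ar f) (G \<inter> pow_univ n U)"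
      using gen_by_pow_completion_reflect[OF pa assms(2)] by blast
  qed
  moreover have "gen_by (pow_op n ar f) (G \<inter> pow_univ n U) \<subseteq> pow_univ n U"
    by (rule gen_by_subset[OF partial_algebra_pow[OF pa]]) simp
  ultimately show ?thesis by (auto simp: generates_def)
qed

lemma generating_set_size_transfer:
  assumes "\<And>G. generates A F G \<Longrightarrow> generates B F' G"
    and "\<And>G. generates B F' G \<Longrightarrow> \<exists>H\<subseteq>G. generates A F H"
  shows "(\<exists>G. generates A F G \<and> (\<exists>h. inj_on h G \<and> h ` G \<subseteq> S))
     \<longleftrightarrow> (\<exists>G. generates B F' G \<and> (\<exists>h. inj_on h G \<and> h ` G \<subseteq> S))"
proof
  assume "\<exists>G. generates A F G \<and> (\<exists>h. inj_on h G \<and> h ` G \<subseteq> S)"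
  with assms(1) show "\<exists>G. generates B F' G \<and> (\<exists>h. inj_on h G \<and> h ` G \<subseteq> S)"
    by blast
next
  assume "\<exists>G. generates B F' G \<and> (\<exists>h. inj_on h G \<and> h ` G \<subseteq> S)"
  then obtain G h where "generates B F' G" "inj_on h G" "h ` G \<subseteq> S"
    by blast
  moreover from assms(2)[OF this(1)] obtain H where "H \<subseteq> G" "generates A F H"
    by blast
  ultimately show "\<exists>G. generates A F G \<and> (\<exists>h. inj_on h G \<and> h ` G \<subseteq> S)"
    by (meson image_mono inj_on_subset order_trans)
qed

lemma minimal_generating_transfer:
  assumes up: "\<And>G. generates A F G \<Longrightarrow> generates B F' G"
    and down: "\<And>G. generates B F' G \<Longrightarrow> \<exists>H\<subseteq>G. generates A F H"
  shows "minimal_generating A F G \<longleftrightarrow> minimal_generating B F' G"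
proof
  assume min: "minimal_generating A F G"
  have "\<not> generates B F' H" if "H \<subset> G" for H
  proof
    assume "generates B F' H"
    then obtain H' where "H' \<subseteq> H" "generates A F H'"
      using down by blast
    moreover from this(1) that have "H' \<subset> G"
      by (rule subset_psubset_trans)
    ultimately show False
      using min by (auto simp: minimal_generating_def)
  qed
  with min up show "minimal_generating B F' G"
    unfolding minimal_generating_def by blast
next
  assume min: "minimal_generating B F' G"
  then have "generates B F' G"
    by (simp add: minimal_generating_def)
  then obtain H where "H \<subseteq> G" "generates A F H"
    using down by blast
  moreover have "\<not> H \<subset> G"
    using min up[OF \<open>generates A F H\<close>] unfolding minimal_generating_def by blast
  ultimately have "generates A F G"
    by (simp add: psubset_eq)
  with min up show "minimal_generating A F G"
    unfolding minimal_generating_def by blast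
qed

theorem theorem3p2:
  fixes U :: "'a set" and ar :: "'i \<Rightarrow> nat" and f :: "'i \<Rightarrow> 'a list \<Rightarrow> 'a option"
    and z :: 'a and n :: nat
  assumes "partial_algebra U ar f"
    and "\<exists>a\<in>U. \<exists>b\<in>U. a \<noteq> b"
    and "z \<notin> U"
  defines "An \<equiv> pow_univ n U" and "Fn \<equiv> pow_op n ar f"
    and "A0n \<equiv> pow_univ n (insert z U)" and "F0n \<equiv> pow_op n (comp_ar ar) (comp_op U z ar f)"
  shows "(\<forall>G. generates An Fn G \<longrightarrow> generates A0n F0n G)
       \<and> (\<forall>G. generates A0n F0n G \<longrightarrow> (\<exists>H\<subseteq>G. generates An Fn H))
       \<and> (\<forall>S :: 'b set. (\<exists>G. generates An Fn G \<and> (\<exists>h. inj_on h G \<and> h ` G \<subseteq> S))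
                      \<longleftrightarrow> (\<exists>G. generates A0n F0n G \<and> (\<exists>h. inj_on h G \<and> h ` G \<subseteq> S)))
       \<and> (\<forall>G. minimal_generating An Fn G \<longleftrightarrow> minimal_generating A0n F0n G)"
proof -
  obtain a b where ab: "a \<in> U" "b \<in> U" "a \<noteq> b"
    using assms(2) by blast
  have up: "generates A0n F0n G" if "generates An Fn G" for G
    using generates_pow_completion[OF assms(1) ab assms(3)] that
    unfolding An_def Fn_def A0n_def F0n_def .
  have down: "\<exists>H\<subseteq>G. generates An Fn H" if "generates A0n F0n G" for G
    using generates_pow_restrict[OF assms(1,3)] that
    unfolding An_def Fn_def A0n_def F0n_def by blast
  show ?thesis
    by (intro conjI allI impI; (erule up | erule down
        | rule generating_set_size_transfer[OF up down] minimal_generating_transfer[OF up down]))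
qed

end
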